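(* For every positive integer $r$ there is a ReLU network $f_s^r:\mathbb{R}\to\mathbb{R}$ all of whose weights lie in $\{\frac12,-\frac12\}$ such that: (i) $f_s^r(0)=0$; (ii) $\sup_{x\in[0,1]}|f_s^r(x)-x^2|\le 2^{-2(r+1)}$; (iii) its depth is $\mathcal{O}(r)$; (iv) its width is bounded by a constant independent of $r$; (v) its number of weights is $\mathcal{O}(r)$.
   Context: A ReLU network is a feedforward network with activation $\sigma(x)=\max(0,x)$ in which each unit connects only to units in the next layer; depth is the number of layers and width the maximum number of units in a layer. *)

theory Defs
  imports Complex_Main
begin

text \<open>A layer is a pair (W, b): W is a list of rows (one per unit of the layer,
  each row holding the weights of the incoming connections from the previous
  layer), b is the list of biases. A zero entry means "no connection".
  A network is a list of layers (affine maps); the ReLU is applied after every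
  layer except the last one.\<close>

type_synonym layer = "real list list \<times> real list"
type_synonym relu_net = "layer list"

definition relu :: "real \<Rightarrow> real" where
  "relu x = max 0 x"

definition affine :: "layer \<Rightarrow> real list \<Rightarrow> real list" where
  "affine L x = map2 (\<lambda>row bi. (\<Sum>(w, v)\<leftarrow>zip row x. w * v) + bi) (fst L) (snd L)"

fun realize :: "relu_net \<Rightarrow> real list \<Rightarrow> real list" where
  "realize [] x = x"
| "realize [L] x = affine L x"
| "realize (L # Ls) x = realize Ls (map relu (affine L x))"

fun wf_layers :: "nat \<Rightarrow> relu_net \<Rightarrow> bool" where
  "wf_layers d [] = (d = 1)"
| "wf_layers d (L # Ls) =
     (length (fst L) = length (snd L) \<and> length (fst L) \<ge> 1 \<and>
      (\<forall>row\<in>set (fst L). length row = d) \<and> wf_layers (length (snd L)) Ls)"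

definition wf_net :: "relu_net \<Rightarrow> bool" where
  "wf_net N \<longleftrightarrow> N \<noteq> [] \<and> wf_layers 1 N"

definition net_fun :: "relu_net \<Rightarrow> real \<Rightarrow> real" where
  "net_fun N t = hd (realize N [t])"

definition depth :: "relu_net \<Rightarrow> nat" where
  "depth N = length N"

definition width :: "relu_net \<Rightarrow> nat" where
  "width N = Max (insert 1 (set (map (\<lambda>L. length (snd L)) N)))"

definition params :: "relu_net \<Rightarrow> real list" where
  "params N = concat (map (\<lambda>L. concat (fst L) @ snd L) N)"

definition num_weights :: "relu_net \<Rightarrow> nat" where
  "num_weights N = length (filter (\<lambda>w. w \<noteq> 0) (params N))"

definition weights_half :: "relu_net \<Rightarrow> bool" where
  "weights_half N \<longleftrightarrow> (\<forall>w\<in>set (params N). w \<noteq> 0 \<longrightarrow> w \<in> {1/2, -1/2})"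

end

theory Submission
  imports Defs
begin

text \<open>With the tent map \<open>g\<close>, the partial sums \<open>x - \<Sum>k<m. g^(k+1)(x) / 4^(k+1)\<close>
  approximate \<open>x^2\<close> on \<open>[0,1]\<close> from above with error at most \<open>4^-(m+1)\<close>, because the
  error after \<open>m+1\<close> terms at \<open>x\<close> is a quarter of the error after \<open>m\<close> terms at \<open>g(x)\<close>.
  One further term costs two hidden layers carrying the scaled iterate \<open>g^n(x) / 4^n\<close>,
  the partial sum and the scale \<open>1 / (2 * 4^n)\<close>. Every quantity is held by two units, so
  that two weights \<open>1/2\<close> add up to a weight \<open>1\<close>.\<close>

lemma relu_nonneg: "0 \<le> x \<Longrightarrow> relu x = x"
  by (simp add: relu_def)

lemma realize_Cons: "Ls \<noteq> [] \<Longrightarrow> realize (L # Ls) x = realize Ls (map relu (affine L x))"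
  by (cases Ls) auto

definition tent :: "real \<Rightarrow> real" where
  "tent y = (if y \<le> 1/2 then 2 * y else 2 - 2 * y)"

definition square_approx :: "nat \<Rightarrow> real \<Rightarrow> real" where
  "square_approx m x = x - (\<Sum>k<m. (tent ^^ Suc k) x / 4 ^ Suc k)"

lemma tent_range: "0 \<le> y \<Longrightarrow> y \<le> 1 \<Longrightarrow> 0 \<le> tent y \<and> tent y \<le> 1"
  by (simp add: tent_def)

lemma funpow_tent_range: "0 \<le> x \<Longrightarrow> x \<le> 1 \<Longrightarrow> 0 \<le> (tent ^^ n) x \<and> (tent ^^ n) x \<le> 1"
  by (induction n) (auto simp: tent_def)

lemma square_approx_zero: "square_approx m 0 = 0"
proof -
  have "(tent ^^ n) 0 = 0" for n by (induction n) (auto simp: tent_def)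
  then show ?thesis by (simp add: square_approx_def tent_def)
qed

lemma square_approx_Suc_left:
  "square_approx (Suc m) x = x - tent x / 2 + square_approx m (tent x) / 4"
proof -
  have "(\<Sum>k<Suc m. (tent ^^ Suc k) x / 4 ^ Suc k)
      = tent x / 4 + (\<Sum>k<m. (tent ^^ Suc k) (tent x) / 4 ^ Suc k) / 4"
    by (subst sum.lessThan_Suc_shift) (simp add: sum_divide_distrib funpow_swap1)
  then show ?thesis by (simp add: square_approx_def field_simps)
qed

lemma square_approx_error:
  assumes "0 \<le> x" "x \<le> 1"
  shows "0 \<le> square_approx m x - x\<^sup>2 \<and> square_approx m x - x\<^sup>2 \<le> 1 / 4 ^ Suc m"
  using assms
proof (induction m arbitrary: x)
  case 0
  have "x - x\<^sup>2 = 1/4 - (x - 1/2)\<^sup>2" by (simp add: power2_eq_square algebra_simps)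
  moreover have "0 \<le> x - x\<^sup>2" using 0 by (simp add: power2_eq_square mult_left_le)
  ultimately show ?case by (simp add: square_approx_def)
next
  case (Suc m)
  have "square_approx (Suc m) x - x\<^sup>2 = (square_approx m (tent x) - (tent x)\<^sup>2) / 4"
    by (simp add: square_approx_Suc_left tent_def power2_eq_square field_simps)
  with Suc.IH[of "tent x"] tent_range[OF Suc.prems] show ?case by simp
qed

definition state_vec :: "real \<Rightarrow> real \<Rightarrow> real \<Rightarrow> real list" where
  "state_vec u A d = [u, u, A, A, d, d]"

definition input_layer :: layer where
  "input_layer = ([[1/2], [1/2], [1/2], [1/2]], [0, 0, 0, 0])"

definition init_layer :: layer where
  "init_layer = ([[1/2, 1/2, 1/2, 1/2], [1/2, 1/2, 1/2, 1/2], [1/2, 1/2, 1/2, 1/2],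
     [1/2, 1/2, 1/2, 1/2], [0, 0, 0, 0], [0, 0, 0, 0]], [0, 0, 0, 0, 1/2, 1/2])"

definition step_layer1 :: layer where
  "step_layer1 = ([[1/2, 1/2, 0, 0, -1/2, -1/2], [1/2, 1/2, 0, 0, -1/2, -1/2],
     [1/2, 0, 0, 0, 0, 0], [1/2, 0, 0, 0, 0, 0], [0, 0, 1/2, 1/2, 0, 0], [0, 0, 1/2, 1/2, 0, 0],
     [0, 0, 0, 0, 1/2, 0], [0, 0, 0, 0, 1/2, 0]], [0, 0, 0, 0, 0, 0, 0, 0])"

definition step_layer2 :: layer where
  "step_layer2 = ([[-1/2, -1/2, 1/2, 1/2, 0, 0, 0, 0], [-1/2, -1/2, 1/2, 1/2, 0, 0, 0, 0],
     [1/2, 1/2, -1/2, -1/2, 1/2, 1/2, 0, 0], [1/2, 1/2, -1/2, -1/2, 1/2, 1/2, 0, 0],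
     [0, 0, 0, 0, 0, 0, 1/2, 0], [0, 0, 0, 0, 0, 0, 1/2, 0]], [0, 0, 0, 0, 0, 0])"

definition output_layer :: layer where
  "output_layer = ([[0, 0, 1/2, 1/2, 0, 0]], [0])"

fun step_layers :: "nat \<Rightarrow> relu_net" where
  "step_layers 0 = []"
| "step_layers (Suc n) = step_layer1 # step_layer2 # step_layers n"

definition square_net :: "nat \<Rightarrow> relu_net" where
  "square_net r = input_layer # init_layer # step_layers r @ [output_layer]"

definition step_map :: "real \<times> real \<times> real \<Rightarrow> real \<times> real \<times> real" where
  "step_map = (\<lambda>(u, A, d).
     (relu (relu (u/2) - relu (u - d)), relu (relu A - relu (u/2) + relu (u - d)), relu (relu (d/2) / 2)))"

lemma step_layers_realize_step_map:
  "map relu (affine step_layer2 (map relu (affine step_layer1 (state_vec u A d)))) =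
   (case step_map (u, A, d) of (u', A', d') \<Rightarrow> state_vec u' A' d')"
proof -
  have "affine step_layer1 (state_vec u A d) = [u - d, u - d, u/2, u/2, A, A, d/2, d/2]"
    by (simp add: step_layer1_def state_vec_def affine_def)
  moreover have "affine step_layer2 [a, a, c, c, f, f, k, l] =
      [c - a, c - a, a - c + f, a - c + f, k/2, k/2]" for a c f k l
    by (simp add: step_layer2_def affine_def)
  ultimately show ?thesis by (simp add: state_vec_def step_map_def algebra_simps)
qed

lemma realize_step_layers:
  "realize (step_layers n @ [output_layer]) (state_vec u A d) =
   [fst (snd ((step_map ^^ n) (u, A, d)))]"
proof (induction n arbitrary: u A d)
  case 0
  show ?case by (simp add: output_layer_def state_vec_def affine_def)
next
  case (Suc n)
  obtain u' A' d' where step: "step_map (u, A, d) = (u', A', d')"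
    by (cases "step_map (u, A, d)") auto
  have "realize (step_layers (Suc n) @ [output_layer]) (state_vec u A d)
      = realize (step_layers n @ [output_layer]) (state_vec u' A' d')"
    using step_layers_realize_step_map[of u A d] step
    by (simp add: realize_Cons)
  also have "\<dots> = [fst (snd ((step_map ^^ n) (u', A', d')))]" by (rule Suc.IH)
  finally show ?case using step by (simp add: funpow_Suc_right del: funpow.simps)
qed

lemma square_net_fun:
  assumes "0 \<le> x"
  shows "net_fun (square_net r) x = fst (snd ((step_map ^^ r) (x, x, 1/2)))"
proof -
  have "map relu (affine init_layer (map relu (affine input_layer [x]))) = state_vec x x (1/2)"
    using assms by (simp add: input_layer_def init_layer_def affine_def state_vec_def relu_nonneg)
  then show ?thesis
    by (simp add: net_fun_def square_net_def realize_Cons realize_step_layers)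
qed

text \<open>One step at scale \<open>c\<close> takes \<open>c\<cdot>y\<close> to \<open>(c/4)\<cdot>tent y\<close>: the first hidden layer
  computes \<open>c\<cdot>y/2\<close> and \<open>c\<cdot>(y - 1/2)\<close>, whose ReLUs differ by \<open>(c/4)\<cdot>tent y\<close>.\<close>

lemma step_map_scaled:
  assumes "0 \<le> y" "y \<le> 1" "0 < c" "0 \<le> A - c / 4 * tent y"
  shows "step_map (c * y, A, c / 2) = (c / 4 * tent y, A - c / 4 * tent y, c / 8)"
proof -
  have tent_split: "relu (c * y / 2) - relu (c * y - c / 2) = c / 4 * tent y"
    using assms(1,3) by (auto simp: relu_def tent_def field_simps mult_le_cancel_left)
  have "0 \<le> c / 4 * tent y" using tent_range[OF assms(1,2)] assms(3) by simp
  with assms(4) have "0 \<le> A" by linarith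
  with assms tent_split \<open>0 \<le> c / 4 * tent y\<close> show ?thesis
    by (simp add: step_map_def relu_nonneg diff_add_eq[symmetric])
qed

lemma funpow_step_map:
  assumes "0 \<le> x" "x \<le> 1"
  shows "(step_map ^^ n) (x, x, 1/2) =
    ((tent ^^ n) x / 4 ^ n, square_approx n x, 1 / (2 * 4 ^ n))"
proof (induction n)
  case 0
  show ?case by (simp add: square_approx_def)
next
  case (Suc n)
  define c :: real where "c = 1 / 4 ^ n"
  define y where "y = (tent ^^ n) x"
  have approx_Suc: "square_approx (Suc n) x = square_approx n x - c / 4 * tent y"
    by (simp add: square_approx_def c_def y_def)
  have "0 \<le> square_approx (Suc n) x"
    using square_approx_error[OF assms, of "Suc n"] zero_le_power2[of x] by linarith
  then have "step_map (c * y, square_approx n x, c / 2) =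
      (c / 4 * tent y, square_approx (Suc n) x, c / 8)"
    using funpow_tent_range[OF assms, of n] approx_Suc
    by (subst step_map_scaled) (auto simp: y_def c_def)
  moreover have "(step_map ^^ Suc n) (x, x, 1/2) = step_map (c * y, square_approx n x, c / 2)"
    using Suc.IH by (simp add: c_def y_def mult.commute)
  ultimately show ?case by (simp add: c_def y_def mult.commute)
qed

lemma params_Cons: "params (L # Ls) = concat (fst L) @ snd L @ params Ls"
  by (simp add: params_def)

lemma params_append: "params (Ls @ Ls') = params Ls @ params Ls'"
  by (simp add: params_def)

lemma wf_net_square_net: "wf_net (square_net r)"
proof -
  have "wf_layers 6 (step_layers n @ [output_layer])" for n
    by (induction n) (simp_all add: step_layer1_def step_layer2_def output_layer_def eval_nat_numeral)
  then show ?thesis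
    by (simp add: wf_net_def square_net_def input_layer_def init_layer_def eval_nat_numeral)
qed

lemma weights_half_square_net: "weights_half (square_net r)"
proof -
  have "set (params (step_layers n @ [output_layer])) \<subseteq> {0, 1/2, -1/2}" for n
    by (induction n)
       (auto simp: params_Cons params_append step_layer1_def step_layer2_def output_layer_def params_def)
  then have "set (params (square_net r)) \<subseteq> {0, 1/2, -1/2}"
    by (auto simp: square_net_def params_Cons input_layer_def init_layer_def)
  then show ?thesis unfolding weights_half_def by auto
qed

lemma num_weights_square_net: "num_weights (square_net r) \<le> 110 * r + 45"
proof -
  have "length (params (step_layers n @ [output_layer])) = 110 * n + 7" for n
    by (induction n)
       (auto simp: params_Cons params_append step_layer1_def step_layer2_def output_layer_def params_def)
  then have "length (params (square_net r)) = 110 * r + 45"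
    by (simp add: square_net_def params_Cons input_layer_def init_layer_def)
  then show ?thesis
    unfolding num_weights_def by (metis length_filter_le)
qed

lemma width_square_net: "width (square_net r) \<le> 8"
proof -
  have "set (map (\<lambda>L. length (snd L)) (step_layers n @ [output_layer])) \<subseteq> {1, 6, 8}" for n
    by (induction n) (auto simp: step_layer1_def step_layer2_def output_layer_def)
  then have "insert 1 (set (map (\<lambda>L. length (snd L)) (square_net r))) \<subseteq> {1, 4, 6, 8}"
    by (auto simp: square_net_def input_layer_def init_layer_def)
  then show ?thesis unfolding width_def by (subst Max_le_iff) auto
qed

lemma depth_square_net: "depth (square_net r) = 2 * r + 3"
proof -
  have "length (step_layers r) = 2 * r" by (induction r) auto
  then show ?thesis by (simp add: depth_def square_net_def)
qed

theorem proposition1: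
  shows "\<exists>C_depth C_width C_weights :: real.
     \<forall>r::nat. r \<ge> 1 \<longrightarrow>
       (\<exists>N. wf_net N \<and> weights_half N \<and>
            net_fun N 0 = 0 \<and>
            (\<forall>x\<in>{0..1::real}. \<bar>net_fun N x - x ^ 2\<bar> \<le> 1 / 2 ^ (2 * (r + 1))) \<and>
            real (depth N) \<le> C_depth * real r \<and>
            real (width N) \<le> C_width \<and>
            real (num_weights N) \<le> C_weights * real r)"
proof (rule exI[of _ 5], rule exI[of _ 8], rule exI[of _ 155], intro allI impI)
  fix r :: nat
  assume "r \<ge> 1"
  have net_value: "net_fun (square_net r) x = square_approx r x" if "x \<in> {0..1}" for x
    using that square_net_fun[of x r] funpow_step_map[of x r] by simp
  have "\<bar>net_fun (square_net r) x - x ^ 2\<bar> \<le> 1 / 2 ^ (2 * (r + 1))" if "x \<in> {0..1}" for x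
    using that net_value[OF that] square_approx_error[of x r] by (simp add: power_mult)
  moreover have "net_fun (square_net r) 0 = 0"
    using net_value[of 0] square_approx_zero by simp
  moreover have "real (num_weights (square_net r)) \<le> 155 * real r"
    using num_weights_square_net[of r] \<open>r \<ge> 1\<close> by linarith
  moreover have "real (depth (square_net r)) \<le> 5 * real r"
    using depth_square_net[of r] \<open>r \<ge> 1\<close> by simp
  ultimately show "\<exists>N. wf_net N \<and> weights_half N \<and> net_fun N 0 = 0 \<and>
      (\<forall>x\<in>{0..1}. \<bar>net_fun N x - x ^ 2\<bar> \<le> 1 / 2 ^ (2 * (r + 1))) \<and>
      real (depth N) \<le> 5 * real r \<and> real (width N) \<le> 8 \<and>
      real (num_weights N) \<le> 155 * real r"
    using wf_net_square_net weights_half_square_net width_square_net[of r]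
    by (intro exI[of _ "square_net r"]) auto
qed

end
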